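(* Let $G$ be a connected graph of order $n\ge 3$. If $px_n(G)=2$, then $G$ is traceable (i.e. $G$ has a Hamilton path).
   Context: All graphs are finite, simple, undirected and connected. An edge-coloring of a graph assigns a color to each edge (adjacent edges may receive the same color). A tree in an edge-colored graph is proper if any two adjacent edges of the tree receive different colors. For $S\subseteq V(G)$, an $S$-tree is a subgraph of $G$ that is a tree containing all vertices of $S$. For a connected graph $G$ of order $n$ and an integer $k$ with $2\le k\le n$, an edge-coloring of $G$ is a $k$-proper coloring if for every set $S$ of $k$ vertices of $G$ there exists a proper $S$-tree in $G$. The $k$-proper index $px_k(G)$ is the minimum number of colors used in a $k$-proper coloring of $G$. *)

theory Defs
  imports Main
begin

definition simple_graph :: "'a set \<Rightarrow> 'a set set \<Rightarrow> bool" where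
  "simple_graph V E \<longleftrightarrow> finite V \<and> (\<forall>e\<in>E. e \<subseteq> V \<and> card e = 2)"

fun is_walk :: "'a set set \<Rightarrow> 'a list \<Rightarrow> bool" where
  "is_walk E [] = False"
| "is_walk E [v] = True"
| "is_walk E (u # v # vs) = ({u, v} \<in> E \<and> is_walk E (v # vs))"

definition connected_graph :: "'a set \<Rightarrow> 'a set set \<Rightarrow> bool" where
  "connected_graph V E \<longleftrightarrow> V \<noteq> {} \<and>
     (\<forall>u\<in>V. \<forall>v\<in>V. \<exists>p. is_walk E p \<and> set p \<subseteq> V \<and> hd p = u \<and> last p = v)"

definition verts_of :: "'a set set \<Rightarrow> 'a set" where
  "verts_of T = \<Union> T"

text \<open>A subgraph of (V,E) with vertex set W and edge set T is a tree if it is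
connected and has exactly card W - 1 edges (equivalently: connected and acyclic).\<close>

definition is_tree :: "'a set \<Rightarrow> 'a set set \<Rightarrow> bool" where
  "is_tree W T \<longleftrightarrow> connected_graph W T \<and> (\<forall>e\<in>T. e \<subseteq> W) \<and> card T + 1 = card W"

definition is_subtree :: "'a set \<Rightarrow> 'a set set \<Rightarrow> 'a set \<Rightarrow> 'a set set \<Rightarrow> bool" where
  "is_subtree V E W T \<longleftrightarrow> W \<subseteq> V \<and> T \<subseteq> E \<and> is_tree W T"

definition proper_tree :: "('a set \<Rightarrow> 'c) \<Rightarrow> 'a set set \<Rightarrow> bool" where
  "proper_tree c T \<longleftrightarrow> (\<forall>e\<in>T. \<forall>f\<in>T. e \<noteq> f \<and> e \<inter> f \<noteq> {} \<longrightarrow> c e \<noteq> c f)"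

definition k_proper_coloring :: "'a set \<Rightarrow> 'a set set \<Rightarrow> nat \<Rightarrow> ('a set \<Rightarrow> nat) \<Rightarrow> bool" where
  "k_proper_coloring V E k c \<longleftrightarrow>
     (\<forall>S. S \<subseteq> V \<and> card S = k \<longrightarrow>
        (\<exists>W T. is_subtree V E W T \<and> S \<subseteq> W \<and> proper_tree c T))"

definition proper_index :: "'a set \<Rightarrow> 'a set set \<Rightarrow> nat \<Rightarrow> nat" where
  "proper_index V E k = (LEAST m. \<exists>c. k_proper_coloring V E k c \<and> card (c ` E) = m)"

definition traceable :: "'a set \<Rightarrow> 'a set set \<Rightarrow> bool" where
  "traceable V E \<longleftrightarrow> (\<exists>p. is_walk E p \<and> distinct p \<and> set p = V)"

end

theory Submission
  imports Defs
begin

text \<open>A 2-colouring that is n-proper yields a proper spanning tree coloured with two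
colours, so no vertex of this tree lies on three of its edges. A connected graph of maximum
degree at most two is traversed by its longest path: an edge leaving that path cannot start
at an end of the path (the path would extend) nor at an inner vertex (that vertex would have
degree three).\<close>

lemma walk_nonempty: "is_walk E p \<Longrightarrow> p \<noteq> []"
  by (cases p) auto

lemma walk_mono: "is_walk T p \<Longrightarrow> T \<subseteq> E \<Longrightarrow> is_walk E p"
  by (induction T p rule: is_walk.induct) auto

lemma walk_Cons: "is_walk E p \<Longrightarrow> {b, hd p} \<in> E \<Longrightarrow> is_walk E (b # p)"
  by (cases p) auto

lemma walk_snoc: "is_walk E p \<Longrightarrow> {last p, b} \<in> E \<Longrightarrow> is_walk E (p @ [b])"
  by (induction E p rule: is_walk.induct) auto

lemma walk_append_edge:
  "is_walk E (xs @ ys) \<Longrightarrow> xs \<noteq> [] \<Longrightarrow> ys \<noteq> [] \<Longrightarrow> {last xs, hd ys} \<in> E"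
proof (induction xs)
  case (Cons x xs)
  then show ?case by (cases xs; cases ys) auto
qed simp

lemma walk_leaves_set:
  "is_walk E p \<Longrightarrow> hd p \<in> A \<Longrightarrow> last p \<notin> A \<Longrightarrow>
   \<exists>a b. {a, b} \<in> E \<and> a \<in> A \<and> b \<notin> A \<and> b \<in> set p"
proof (induction E p rule: is_walk.induct)
  case (3 E u v vs)
  then show ?case by (cases "v \<in> A") auto
qed auto

lemma simple_graph_finite_edges: "simple_graph V E \<Longrightarrow> finite E"
  unfolding simple_graph_def by (metis Pow_iff finite_Pow_iff rev_finite_subset subsetI)

lemma traceable_mono: "traceable V T \<Longrightarrow> T \<subseteq> E \<Longrightarrow> traceable V E"
  unfolding traceable_def using walk_mono by blast

lemma connected_graph_add_leaf:
  assumes con: "connected_graph W T" and a: "a \<in> W"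
  shows "connected_graph (insert b W) (insert {a, b} T)"
  unfolding connected_graph_def
proof (intro conjI ballI)
  let ?W = "insert b W" and ?T = "insert {a, b} T"
  have walk_in_W: "\<exists>p. is_walk T p \<and> set p \<subseteq> W \<and> hd p = u \<and> last p = v"
    if "u \<in> W" "v \<in> W" for u v
    using con that unfolding connected_graph_def by blast
  fix u v assume u: "u \<in> ?W" and v: "v \<in> ?W"
  consider "u \<in> W" "v \<in> W" | "u = b" "v \<in> W" | "u \<in> W" "v = b" | "u = b" "v = b"
    using u v by blast
  then show "\<exists>p. is_walk ?T p \<and> set p \<subseteq> ?W \<and> hd p = u \<and> last p = v"
  proof cases
    case 1
    then obtain p where "is_walk T p" "set p \<subseteq> W" "hd p = u" "last p = v"
      using walk_in_W by blast
    then show ?thesis by (intro exI[of _ p]) (auto intro: walk_mono)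
  next
    case 2
    then obtain p where p: "is_walk T p" "set p \<subseteq> W" "hd p = a" "last p = v"
      using walk_in_W a by blast
    have "is_walk ?T p" using walk_mono[OF p(1)] by blast
    then have "is_walk ?T (b # p)" using p by (intro walk_Cons) (auto simp: insert_commute)
    then show ?thesis using p 2 walk_nonempty by (intro exI[of _ "b # p"]) auto
  next
    case 3
    then obtain p where p: "is_walk T p" "set p \<subseteq> W" "hd p = u" "last p = a"
      using walk_in_W a by blast
    have "is_walk ?T p" using walk_mono[OF p(1)] by blast
    then have "is_walk ?T (p @ [b])" using p by (intro walk_snoc) auto
    then show ?thesis using p 3 walk_nonempty[OF p(1)] by (intro exI[of _ "p @ [b]"]) auto
  next
    case 4
    then show ?thesis by (intro exI[of _ "[b]"]) auto
  qed
qed (rule insert_not_empty)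

lemma is_tree_add_leaf:
  assumes tree: "is_tree W T" and "finite W" and "a \<in> W" and "b \<notin> W"
  shows "is_tree (insert b W) (insert {a, b} T)"
proof -
  have "T \<subseteq> Pow W" using tree unfolding is_tree_def by blast
  then have "finite T" using \<open>finite W\<close> finite_subset by blast
  moreover have "{a, b} \<notin> T" using tree \<open>b \<notin> W\<close> unfolding is_tree_def by blast
  ultimately show ?thesis
    using assms connected_graph_add_leaf unfolding is_tree_def by auto
qed

lemma subtree_add_leaf:
  assumes "finite V" and con: "connected_graph V E" and st: "is_subtree V E W T"
    and "W \<noteq> {}" and "W \<noteq> V"
  obtains a b where "b \<in> V - W" "is_subtree V E (insert b W) (insert {a, b} T)"
proof -
  have WV: "W \<subseteq> V" using st unfolding is_subtree_def by blast
  obtain w v where "w \<in> W" "v \<in> V - W" using WV \<open>W \<noteq> {}\<close> \<open>W \<noteq> V\<close> by blast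
  then obtain p where "is_walk E p" "set p \<subseteq> V" "hd p = w" "last p = v"
    using con WV unfolding connected_graph_def by blast
  then obtain a b where ab: "{a, b} \<in> E" "a \<in> W" "b \<notin> W" "b \<in> V"
    using walk_leaves_set[of E p W] \<open>w \<in> W\<close> \<open>v \<in> V - W\<close> by blast
  have "is_tree (insert b W) (insert {a, b} T)"
    using st ab WV \<open>finite V\<close> finite_subset
    by (intro is_tree_add_leaf) (auto simp: is_subtree_def)
  then have "is_subtree V E (insert b W) (insert {a, b} T)"
    using st ab unfolding is_subtree_def by blast
  then show thesis using that ab by blast
qed

lemma subtree_extends_to_spanning_tree:
  assumes "finite V" and "connected_graph V E" and "is_subtree V E W T" and "W \<noteq> {}"
  shows "\<exists>T'. is_subtree V E V T'"
  using assms(3,4)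
proof (induction "card (V - W)" arbitrary: W T rule: less_induct)
  case less
  show ?case
  proof (cases "W = V")
    case True
    then show ?thesis using less.prems by blast
  next
    case False
    then obtain a b where b: "b \<in> V - W" and st: "is_subtree V E (insert b W) (insert {a, b} T)"
      using subtree_add_leaf[OF assms(1,2) less.prems] by blast
    have "card (V - insert b W) < card (V - W)"
      using b \<open>finite V\<close> by (metis Diff_insert card_Diff1_less finite_Diff)
    then show ?thesis using less.hyps st by blast
  qed
qed

lemma exists_spanning_tree:
  assumes "finite V" and con: "connected_graph V E"
  shows "\<exists>T. is_subtree V E V T"
proof -
  obtain v where "v \<in> V" using con unfolding connected_graph_def by blast
  then have "is_subtree V E {v} {}"
    unfolding is_subtree_def is_tree_def connected_graph_def by (auto intro!: exI[of _ "[v]"])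
  then show ?thesis using subtree_extends_to_spanning_tree[OF assms] by blast
qed

lemma k_proper_coloring_if_inj:
  assumes "is_subtree V E V T" and "inj_on c E"
  shows "k_proper_coloring V E k c"
proof -
  have "proper_tree c T"
    using assms unfolding proper_tree_def is_subtree_def inj_on_def by blast
  then show ?thesis using assms(1) unfolding k_proper_coloring_def by blast
qed

text \<open>The LEAST in proper_index is attained only because some
k-proper colouring exists: colour the edges injectively.\<close>

lemma proper_index_attained:
  assumes sg: "simple_graph V E" and con: "connected_graph V E"
  obtains c where "k_proper_coloring V E k c" "card (c ` E) = proper_index V E k"
proof -
  have "finite V" using sg unfolding simple_graph_def by blast
  then obtain T where T: "is_subtree V E V T" using exists_spanning_tree con by blast
  obtain f :: "'a set \<Rightarrow> nat" where f: "inj_on f E"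
    using finite_imp_inj_to_nat_seg[OF simple_graph_finite_edges[OF sg]] by blast
  have "k_proper_coloring V E k f" using k_proper_coloring_if_inj[OF T f] .
  then have "\<exists>m c. k_proper_coloring V E k c \<and> card (c ` E) = m" by blast
  then have "\<exists>c. k_proper_coloring V E k c \<and> card (c ` E) = proper_index V E k"
    unfolding proper_index_def by (rule LeastI_ex)
  then show thesis using that by blast
qed

definition degree_le_two :: "'a set set \<Rightarrow> bool" where
  "degree_le_two T \<longleftrightarrow>
     (\<forall>a x y z. {a, x} \<in> T \<longrightarrow> {a, y} \<in> T \<longrightarrow> {a, z} \<in> T \<longrightarrow> \<not> distinct [a, x, y, z])"

lemma degree_le_two_if_proper_tree_two_colours:
  assumes proper: "proper_tree c T" and "finite T" and "card (c ` T) \<le> 2"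
  shows "degree_le_two T"
  unfolding degree_le_two_def
proof (intro allI impI notI)
  fix a x y z assume edges: "{a, x} \<in> T" "{a, y} \<in> T" "{a, z} \<in> T" and "distinct [a, x, y, z]"
  then have "c {a, x} \<noteq> c {a, y}" "c {a, x} \<noteq> c {a, z}" "c {a, y} \<noteq> c {a, z}"
    using proper unfolding proper_tree_def by (auto simp: doubleton_eq_iff)
  then have "card {c {a, x}, c {a, y}, c {a, z}} = 3" by simp
  moreover have "{c {a, x}, c {a, y}, c {a, z}} \<subseteq> c ` T" using edges by blast
  ultimately have "3 \<le> card (c ` T)" using \<open>finite T\<close> by (metis card_mono finite_imageI)
  then show False using \<open>card (c ` T) \<le> 2\<close> by simp
qed

lemma path_extends_if_degree_le_two:
  assumes con: "connected_graph V T"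
    and deg: "degree_le_two T"
    and p: "is_walk T p" "distinct p" "set p \<subseteq> V" and "set p \<noteq> V"
  shows "\<exists>q. is_walk T q \<and> distinct q \<and> set q \<subseteq> V \<and> length p < length q"
proof -
  obtain v where v: "v \<in> V" "v \<notin> set p" using p \<open>set p \<noteq> V\<close> by blast
  have "hd p \<in> V" using p walk_nonempty[OF p(1)] by auto
  then obtain r where "is_walk T r" "set r \<subseteq> V" "hd r = hd p" "last r = v"
    using con v unfolding connected_graph_def by blast
  then obtain a b where ab: "{a, b} \<in> T" "a \<in> set p" "b \<notin> set p" "b \<in> V"
    using walk_leaves_set[of T r "set p"] v walk_nonempty[OF p(1)] by fastforce
  obtain xs ys where split: "p = xs @ a # ys" using split_list[OF ab(2)] by blast
  consider "xs = []" | "ys = []" | "xs \<noteq> []" "ys \<noteq> []" by blast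
  then show ?thesis
  proof cases
    case 1
    then have "is_walk T (b # p)" using p ab split by (intro walk_Cons) (auto simp: insert_commute)
    then show ?thesis using p ab by (intro exI[of _ "b # p"]) auto
  next
    case 2
    then have "is_walk T (p @ [b])" using p ab split by (intro walk_snoc) auto
    then show ?thesis using p ab by (intro exI[of _ "p @ [b]"]) auto
  next
    case 3
    have "{last xs, a} \<in> T" using walk_append_edge[of T xs "a # ys"] p split 3 by simp
    moreover have "{a, hd ys} \<in> T"
      using walk_append_edge[of T "xs @ [a]" ys] p split 3 by simp
    moreover have "distinct [a, last xs, hd ys, b]"
      using p(2) ab split 3 by (auto dest: last_in_set hd_in_set)
    ultimately show ?thesis using deg ab(1) unfolding degree_le_two_def by (metis insert_commute)
  qed
qed

lemma traceable_if_degree_le_two: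
  assumes "finite V" and con: "connected_graph V T"
    and deg: "degree_le_two T"
  shows "traceable V T"
proof -
  let ?path = "\<lambda>p. is_walk T p \<and> distinct p \<and> set p \<subseteq> V"
  obtain v where "v \<in> V" using con unfolding connected_graph_def by blast
  then have "?path [v]" by simp
  moreover have "length p < card V + 1" if "?path p" for p
    using that \<open>finite V\<close> by (metis card_mono distinct_card less_Suc_eq_le Suc_eq_plus1)
  ultimately obtain p where p: "?path p" and longest: "\<And>q. ?path q \<Longrightarrow> length q \<le> length p"
    using ex_has_greatest_nat[of ?path "[v]" length "card V + 1"] by blast
  have "set p = V"
  proof (rule ccontr)
    assume "set p \<noteq> V"
    then obtain q where "?path q" "length p < length q"
      using path_extends_if_degree_le_two[OF con deg] p by blast
    then show False using longest leD by blast
  qed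
  then show ?thesis unfolding traceable_def using p by blast
qed

theorem mainTheorem5:
  fixes V :: "'a set" and E :: "'a set set"
  assumes "simple_graph V E"
    and "connected_graph V E"
    and "card V \<ge> 3"
    and "proper_index V E (card V) = 2"
  shows "traceable V E"
proof -
  obtain c where c: "k_proper_coloring V E (card V) c" "card (c ` E) = 2"
    using proper_index_attained[OF assms(1,2)] assms(4) by metis
  then obtain W T where st: "is_subtree V E W T" "V \<subseteq> W" and "proper_tree c T"
    unfolding k_proper_coloring_def by blast
  have "T \<subseteq> E" "W = V" using st unfolding is_subtree_def by auto
  have "finite E" using simple_graph_finite_edges assms(1) .
  then have "finite T" "card (c ` T) \<le> 2"
    using \<open>T \<subseteq> E\<close> c(2) finite_subset card_mono[of "c ` E" "c ` T"] by auto
  have "connected_graph V T" using st \<open>W = V\<close> unfolding is_subtree_def is_tree_def by blast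
  moreover have "degree_le_two T"
    using \<open>proper_tree c T\<close> \<open>finite T\<close> \<open>card (c ` T) \<le> 2\<close>
    by (rule degree_le_two_if_proper_tree_two_colours)
  ultimately have "traceable V T"
    using assms(1) traceable_if_degree_le_two unfolding simple_graph_def by blast
  then show ?thesis using traceable_mono \<open>T \<subseteq> E\<close> by blast
qed

end
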